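(* (General model.) For every $p\ge 2$ there exists an in-tree task graph $T$ such that every schedule $S$ of $T$ on $p$ processors satisfies $$\frac{C_{\max}(S)}{C^*_p(T)}\cdot\frac{M(S)}{M^*_p(T)}\ \ge\ p;$$ hence no algorithm is both an $\alpha(p)$-approximation for makespan and a $\beta(p)$-approximation for peak memory with $\alpha(p)\beta(p)<p$. Moreover this bound is tight: for every in-tree $T$ and every $p$, a single-processor schedule (without idle time) of minimum peak memory has peak memory $M^*_p(T)$ and makespan at most $p\,C^*_p(T)$.
   Context: Model (general). An in-tree task graph $T$ has nodes $\{1,\dots,n\}$ and a root; every non-root node $i$ has a parent, and $\mathrm{Children}(i)$ is the set of children of $i$. Each node $i$ has an arbitrary processing time $w_i\ge 0$, execution-file size $n_i\ge 0$ and output-file size $f_i\ge 0$. A schedule on $p$ identical processors assigns each node $i$ a processor and a start time $\sigma_i\ge 0$; node $i$ runs without preemption during $[\sigma_i,\sigma_i+w_i)$, a processor runs at most one node at a time, and a node may start only after all its children have completed. The makespan is $C_{\max}=\max_i(\sigma_i+w_i)$. Memory: the output file of $i$ (size $f_i$) occupies memory from the start of $i$ until the completion of the parent of $i$ (for the root, until the end of the schedule), and the execution file of $i$ (size $n_i$) occupies memory while $i$ runs. The memory used at time $t$ is the total size of files present at time $t$; the peak memory $M(S)$ is the supremum over $t$ of the memory used. $C^*_p(T)$ denotes the minimum makespan and $M^*_p(T)$ the minimum peak memory over all schedules of $T$ on $p$ processors. *)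

theory Defs
  imports Complex_Main
begin

text \<open>In-tree task graph: finite node set V (of naturals), root r, parent function par
  (only meaningful on V - {r}), processing times w, execution-file sizes nf,
  output-file sizes f.\<close>

definition parent_rel :: "nat set \<Rightarrow> nat \<Rightarrow> (nat \<Rightarrow> nat) \<Rightarrow> (nat \<times> nat) set" where
  "parent_rel V r par = {(x, par x) | x. x \<in> V \<and> x \<noteq> r}"

definition children :: "nat set \<Rightarrow> nat \<Rightarrow> (nat \<Rightarrow> nat) \<Rightarrow> nat \<Rightarrow> nat set" where
  "children V r par i = {j \<in> V. j \<noteq> r \<and> par j = i}"

definition in_tree ::
  "nat set \<Rightarrow> nat \<Rightarrow> (nat \<Rightarrow> nat) \<Rightarrow> (nat \<Rightarrow> real) \<Rightarrow> (nat \<Rightarrow> real) \<Rightarrow> (nat \<Rightarrow> real) \<Rightarrow> bool" where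
  "in_tree V r par w nf f \<longleftrightarrow>
     finite V \<and> r \<in> V \<and>
     (\<forall>i \<in> V - {r}. par i \<in> V) \<and>
     (\<forall>i \<in> V. (i, r) \<in> (parent_rel V r par)\<^sup>*) \<and>
     (\<forall>i \<in> V. w i \<ge> 0 \<and> nf i \<ge> 0 \<and> f i \<ge> 0)"

definition valid_sched ::
  "nat set \<Rightarrow> nat \<Rightarrow> (nat \<Rightarrow> nat) \<Rightarrow> (nat \<Rightarrow> real) \<Rightarrow> nat \<Rightarrow> (nat \<Rightarrow> nat) \<Rightarrow> (nat \<Rightarrow> real) \<Rightarrow> bool" where
  "valid_sched V r par w p proc \<sigma> \<longleftrightarrow>
     (\<forall>i \<in> V. proc i < p \<and> \<sigma> i \<ge> 0) \<and>
     (\<forall>i \<in> V. \<forall>j \<in> V. i \<noteq> j \<and> proc i = proc j \<longrightarrow>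
         {\<sigma> i..<\<sigma> i + w i} \<inter> {\<sigma> j..<\<sigma> j + w j} = {}) \<and>
     (\<forall>i \<in> V. \<forall>j \<in> children V r par i. \<sigma> j + w j \<le> \<sigma> i)"

definition Cmax :: "nat set \<Rightarrow> (nat \<Rightarrow> real) \<Rightarrow> (nat \<Rightarrow> real) \<Rightarrow> real" where
  "Cmax V w \<sigma> = Max ((\<lambda>i. \<sigma> i + w i) ` V)"

text \<open>End of the lifetime of the output file of i: completion of its parent, or the end
  of the schedule for the root.\<close>
definition out_end :: "nat set \<Rightarrow> nat \<Rightarrow> (nat \<Rightarrow> nat) \<Rightarrow> (nat \<Rightarrow> real) \<Rightarrow> (nat \<Rightarrow> real) \<Rightarrow> nat \<Rightarrow> real" where
  "out_end V r par w \<sigma> i = (if i = r then Cmax V w \<sigma> else \<sigma> (par i) + w (par i))"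

definition mem_at ::
  "nat set \<Rightarrow> nat \<Rightarrow> (nat \<Rightarrow> nat) \<Rightarrow> (nat \<Rightarrow> real) \<Rightarrow> (nat \<Rightarrow> real) \<Rightarrow> (nat \<Rightarrow> real)
     \<Rightarrow> (nat \<Rightarrow> real) \<Rightarrow> real \<Rightarrow> real" where
  "mem_at V r par w nf f \<sigma> t =
     (\<Sum>i \<in> V. (if \<sigma> i \<le> t \<and> t < out_end V r par w \<sigma> i then f i else 0)
             + (if \<sigma> i \<le> t \<and> t < \<sigma> i + w i then nf i else 0))"

definition peak_mem ::
  "nat set \<Rightarrow> nat \<Rightarrow> (nat \<Rightarrow> nat) \<Rightarrow> (nat \<Rightarrow> real) \<Rightarrow> (nat \<Rightarrow> real) \<Rightarrow> (nat \<Rightarrow> real)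
     \<Rightarrow> (nat \<Rightarrow> real) \<Rightarrow> real" where
  "peak_mem V r par w nf f \<sigma> = (SUP t. mem_at V r par w nf f \<sigma> t)"

definition Cstar :: "nat set \<Rightarrow> nat \<Rightarrow> (nat \<Rightarrow> nat) \<Rightarrow> (nat \<Rightarrow> real) \<Rightarrow> nat \<Rightarrow> real" where
  "Cstar V r par w p = Inf {Cmax V w \<sigma> | \<sigma>. \<exists>proc. valid_sched V r par w p proc \<sigma>}"

definition Mstar ::
  "nat set \<Rightarrow> nat \<Rightarrow> (nat \<Rightarrow> nat) \<Rightarrow> (nat \<Rightarrow> real) \<Rightarrow> (nat \<Rightarrow> real) \<Rightarrow> (nat \<Rightarrow> real) \<Rightarrow> nat \<Rightarrow> real" where
  "Mstar V r par w nf f p =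
     Inf {peak_mem V r par w nf f \<sigma> | \<sigma>. \<exists>proc. valid_sched V r par w p proc \<sigma>}"

definition no_idle :: "nat set \<Rightarrow> (nat \<Rightarrow> real) \<Rightarrow> (nat \<Rightarrow> real) \<Rightarrow> bool" where
  "no_idle V w \<sigma> \<longleftrightarrow>
     (\<forall>t. 0 \<le> t \<and> t < Cmax V w \<sigma> \<longrightarrow> (\<exists>i \<in> V. \<sigma> i \<le> t \<and> t < \<sigma> i + w i))"

end

theory Submission
  imports Defs "HOL-Analysis.Analysis" "HOL-Library.List_Lexorder"
begin

text \<open>
  The lower bound uses the star tree: a root of length 0 with p unit-length
  leaves whose execution files have size 1 (and no output files).  All leaves in parallel give
  makespan 1 and one leaf at a time gives peak memory 1, so C* = M* = 1; for an arbitrary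
  schedule a pigeonhole count over unit-spaced instants finds an instant at which at least
  p / Cmax leaves run, i.e. p \<le> Cmax \<cdot> M.

  The tightness part rests on compaction.  Every schedule on p processors is turned into a
  single-processor schedule without idle time by ordering the tasks by completion time (ties
  broken by start time, depth and index) and executing them back to back.  Every file present
  at an instant of the compacted schedule is present in the original schedule at one common
  instant, so compaction does not increase the peak memory.  The compacted schedules form a
  finite set, so a memory-optimal one exists, and its peak is M* for every number of
  processors; the makespan of any idle-free single-processor schedule is at most the total
  work, which is at most p \<cdot> C*.
\<close>

section \<open>Back-to-back sequential schedules\<close>

definition seq_start :: "nat set \<Rightarrow> (nat \<Rightarrow> real) \<Rightarrow> (nat \<Rightarrow> 'k::linorder) \<Rightarrow> nat \<Rightarrow> real" where
  "seq_start V w key i = (if i \<in> V then (\<Sum>k\<in>{k\<in>V. key k < key i}. w k) else 0)"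

text \<open>Start-time functions in which each task starts at the total work of some set of tasks;
  there are finitely many, and they include all back-to-back schedules.\<close>

definition pred_sum_schedules :: "nat set \<Rightarrow> (nat \<Rightarrow> real) \<Rightarrow> (nat \<Rightarrow> real) set" where
  "pred_sum_schedules V w = (\<lambda>B i. if i \<in> V then sum w (B i) else 0) ` (PiE V (\<lambda>_. Pow V))"

lemma finite_pred_sum_schedules: "finite V \<Longrightarrow> finite (pred_sum_schedules V w)"
  unfolding pred_sum_schedules_def by (intro finite_imageI finite_PiE) auto

context
  fixes V :: "nat set" and w :: "nat \<Rightarrow> real" and key :: "nat \<Rightarrow> 'k::linorder"
  assumes fin: "finite V" and w_nonneg: "\<And>i. i \<in> V \<Longrightarrow> 0 \<le> w i"
begin

lemma seq_start_nonneg: "0 \<le> seq_start V w key i"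
  unfolding seq_start_def using w_nonneg by (auto intro: sum_nonneg)

lemma seq_start_before:
  assumes "k \<in> V" "i \<in> V" "key k < key i"
  shows "seq_start V w key k + w k \<le> seq_start V w key i"
proof -
  have "seq_start V w key k + w k = (\<Sum>m\<in>insert k {m\<in>V. key m < key k}. w m)"
    using assms(1) fin by (simp add: seq_start_def add.commute)
  also have "\<dots> \<le> (\<Sum>m\<in>{m\<in>V. key m < key i}. w m)"
    by (rule sum_mono2) (use fin assms w_nonneg in auto)
  finally show ?thesis using assms(2) by (simp add: seq_start_def)
qed

lemma seq_start_order:
  assumes "k \<in> V" "i \<in> V" "seq_start V w key k < seq_start V w key i + w i"
  shows "key k \<le> key i"
proof (rule ccontr)
  assume "\<not> key k \<le> key i"
  then have "seq_start V w key i + w i \<le> seq_start V w key k"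
    by (intro seq_start_before[OF assms(2,1)]) simp
  then show False using assms(3) by linarith
qed

lemma seq_start_first:
  assumes "m \<in> V" "\<And>k. k \<in> V \<Longrightarrow> \<not> key k < key m"
  shows "seq_start V w key m = 0"
proof -
  have none: "{k\<in>V. key k < key m} = {}" using assms(2) by blast
  show ?thesis unfolding seq_start_def none using assms(1) by simp
qed

lemma seq_start_end:
  assumes "i \<in> V"
  shows "seq_start V w key i + w i \<le> sum w V"
proof -
  have "seq_start V w key i + w i = (\<Sum>m\<in>insert i {m\<in>V. key m < key i}. w m)"
    using assms fin by (simp add: seq_start_def add.commute)
  also have "\<dots> \<le> sum w V"
    by (rule sum_mono2) (use fin assms w_nonneg in auto)
  finally show ?thesis .
qed

lemma seq_start_in_pred_sum_schedules: "seq_start V w key \<in> pred_sum_schedules V w"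
  unfolding pred_sum_schedules_def
proof (rule image_eqI)
  show "seq_start V w key = (\<lambda>i. if i \<in> V then sum w (restrict (\<lambda>i. {k\<in>V. key k < key i}) V i) else 0)"
    by (rule ext) (simp add: seq_start_def)
qed auto

lemma seq_start_Cmax:
  assumes "V \<noteq> {}"
  shows "Cmax V w (seq_start V w key) \<le> sum w V"
  unfolding Cmax_def using fin assms seq_start_end by (subst Max_le_iff) auto

context
  assumes inj: "inj_on key V"
begin

lemma seq_start_last:
  assumes "i \<in> V" "\<And>k. k \<in> V \<Longrightarrow> \<not> key i < key k"
  shows "seq_start V w key i + w i = sum w V"
proof -
  have "{m\<in>V. key m < key i} = V - {i}"
  proof (intro set_eqI iffI)
    fix m assume "m \<in> V - {i}"
    then have "key m \<noteq> key i" "\<not> key i < key m" using assms inj by (auto simp: inj_on_eq_iff)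
    then show "m \<in> {m\<in>V. key m < key i}" using \<open>m \<in> V - {i}\<close> by auto
  qed auto
  then show ?thesis using assms(1) fin by (simp add: seq_start_def sum_diff1)
qed

lemma seq_start_next:
  assumes "i \<in> V" "k \<in> V" "key i < key k"
    and "\<And>j. j \<in> V \<Longrightarrow> key i < key j \<Longrightarrow> \<not> key j < key k"
  shows "seq_start V w key k = seq_start V w key i + w i"
proof -
  have "{m\<in>V. key m < key k} = insert i {m\<in>V. key m < key i}"
  proof (intro set_eqI iffI)
    fix m assume m: "m \<in> {m\<in>V. key m < key k}"
    show "m \<in> insert i {m\<in>V. key m < key i}"
    proof (cases "m = i")
      case False
      then have "key m \<noteq> key i" using m assms(1) inj by (auto simp: inj_on_eq_iff)
      moreover have "\<not> key i < key m" using assms(4) m by auto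
      ultimately show ?thesis using m by auto
    qed simp
  qed (use assms(1,3) in auto)
  then show ?thesis using assms fin by (simp add: seq_start_def)
qed

lemma seq_start_no_idle:
  assumes "V \<noteq> {}"
  shows "no_idle V w (seq_start V w key)"
  unfolding no_idle_def
proof (intro allI impI)
  fix t assume t: "0 \<le> t \<and> t < Cmax V w (seq_start V w key)"
  let ?S = "seq_start V w key"
  define A where "A = {k\<in>V. ?S k \<le> t}"
  have finA: "finite A" using fin by (simp add: A_def)
  have "A \<noteq> {}"
  proof -
    have "Min (key ` V) \<in> key ` V" using fin assms by (intro Min_in) auto
    then obtain m where m: "m \<in> V" "Min (key ` V) = key m" by blast
    have m_min: "key m \<le> key k" if "k \<in> V" for k
      using Min_le[of "key ` V" "key k"] fin that m(2) by simp
    have "?S m = 0" by (rule seq_start_first) (use m m_min in \<open>auto simp: not_less\<close>)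
    then show ?thesis using m t by (auto simp: A_def)
  qed
  then have "Max (key ` A) \<in> key ` A" using finA by (intro Max_in) auto
  then obtain i where i: "i \<in> A" "Max (key ` A) = key i" by blast
  have i_max: "key k \<le> key i" if "k \<in> A" for k
    using Max_ge[of "key ` A" "key k"] finA that i(2) by simp
  have "t < ?S i + w i"
  proof (rule ccontr)
    assume late: "\<not> t < ?S i + w i"
    show False
    proof (cases "\<exists>k\<in>V. key i < key k")
      case False
      then have "?S i + w i = sum w V" using i(1) unfolding A_def by (intro seq_start_last) auto
      then show False using seq_start_Cmax[OF assms] t late by linarith
    next
      case True
      let ?B = "{k\<in>V. key i < key k}"
      have finB: "finite ?B" using fin by simp
      have "Min (key ` ?B) \<in> key ` ?B" using finB True by (intro Min_in) auto
      then obtain k where k: "k \<in> ?B" "Min (key ` ?B) = key k" by blast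
      have k_min: "\<not> key j < key k" if "j \<in> ?B" for j
        using Min_le[of "key ` ?B" "key j"] finB that k(2) by simp
      have "?S k = ?S i + w i"
        by (rule seq_start_next) (use i k k_min in \<open>auto simp: A_def\<close>)
      then have "k \<in> A" using late k by (auto simp: A_def)
      then show False using i_max[of k] k(1) by (simp add: not_le[symmetric])
    qed
  qed
  then show "\<exists>i\<in>V. ?S i \<le> t \<and> t < ?S i + w i" using i by (auto simp: A_def)
qed

lemma seq_start_valid:
  assumes "\<And>j. j \<in> V \<Longrightarrow> j \<noteq> r \<Longrightarrow> key j < key (par j)"
  shows "valid_sched V r par w 1 (\<lambda>_. 0) (seq_start V w key)"
  unfolding valid_sched_def
proof (intro conjI ballI impI)
  fix i j assume ij: "i \<in> V" "j \<in> V" "i \<noteq> j \<and> (0::nat) = 0"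
  then have "key i \<noteq> key j" using inj by (auto simp: inj_on_eq_iff)
  then consider "key i < key j" | "key j < key i" using neqE by blast
  then show "{seq_start V w key i..<seq_start V w key i + w i} \<inter>
      {seq_start V w key j..<seq_start V w key j + w j} = {}"
  proof cases
    case 1 then show ?thesis using seq_start_before[of i j] ij by auto
  next
    case 2 then show ?thesis using seq_start_before[of j i] ij by auto
  qed
next
  fix i j assume "i \<in> V" "j \<in> children V r par i"
  then show "seq_start V w key j + w j \<le> seq_start V w key i"
    using seq_start_before assms by (auto simp: children_def)
qed (auto simp: seq_start_nonneg)

end
end

section \<open>Memory and makespan of in-tree task graphs\<close>

lemma fmeasurable_Ico: "{a..<b::real} \<in> fmeasurable lborel"
proof (rule fmeasurableI2[of "{a..b}"])
  show "{a..b} \<in> fmeasurable lborel" using fmeasurable_cbox[of a b] by (simp add: cbox_interval)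
qed auto

locale task_tree =
  fixes V r par w nf f
  assumes tree: "in_tree V r par w nf f"
begin

lemma fin: "finite V" and root_in: "r \<in> V" and par_in: "\<And>i. i \<in> V \<Longrightarrow> i \<noteq> r \<Longrightarrow> par i \<in> V"
  and w_nonneg: "\<And>i. i \<in> V \<Longrightarrow> 0 \<le> w i" and nf_nonneg: "\<And>i. i \<in> V \<Longrightarrow> 0 \<le> nf i"
  and f_nonneg: "\<And>i. i \<in> V \<Longrightarrow> 0 \<le> f i"
  using tree unfolding in_tree_def by auto

lemma Cmax_ge: "i \<in> V \<Longrightarrow> s i + w i \<le> Cmax V w s"
  unfolding Cmax_def using fin by auto

lemma Cmax_nonneg: "(\<And>i. i \<in> V \<Longrightarrow> 0 \<le> s i) \<Longrightarrow> 0 \<le> Cmax V w s"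
  using Cmax_ge[OF root_in, of s] w_nonneg[OF root_in] root_in by fastforce

lemma out_end_le_Cmax: "i \<in> V \<Longrightarrow> out_end V r par w s i \<le> Cmax V w s"
  using Cmax_ge par_in unfolding out_end_def by auto

text \<open>The memory profile is non-negative and bounded, so the peak is its least upper bound.\<close>

lemma mem_at_nonneg: "0 \<le> mem_at V r par w nf f s t"
  unfolding mem_at_def using f_nonneg nf_nonneg by (intro sum_nonneg) auto

lemma peak_ge: "mem_at V r par w nf f s t \<le> peak_mem V r par w nf f s"
proof -
  have "mem_at V r par w nf f s t' \<le> (\<Sum>i\<in>V. f i + nf i)" for t'
    unfolding mem_at_def using f_nonneg nf_nonneg by (intro sum_mono) auto
  then show ?thesis unfolding peak_mem_def by (intro cSUP_upper bdd_aboveI2) auto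
qed

lemma peak_le: "(\<And>t. mem_at V r par w nf f s t \<le> B) \<Longrightarrow> peak_mem V r par w nf f s \<le> B"
  unfolding peak_mem_def by (rule cSUP_least) auto

lemma peak_nonneg: "0 \<le> peak_mem V r par w nf f s"
  using peak_ge[of s 0] mem_at_nonneg[of s 0] by linarith


lemma mem_at_outside:
  assumes "\<And>i. i \<in> V \<Longrightarrow> 0 \<le> s i" and "\<not> (0 \<le> t \<and> t < Cmax V w s)"
  shows "mem_at V r par w nf f s t = 0"
  unfolding mem_at_def
proof (rule sum.neutral, rule ballI)
  fix k assume k: "k \<in> V"
  have "0 \<le> s k" "s k + w k \<le> Cmax V w s" "out_end V r par w s k \<le> Cmax V w s"
    using assms(1) Cmax_ge out_end_le_Cmax k by auto
  then show "(if s k \<le> t \<and> t < out_end V r par w s k then f k else 0)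
      + (if s k \<le> t \<and> t < s k + w k then nf k else 0) = 0"
    using assms(2) by auto
qed

lemma mem_at_le_if_files_persist:
  assumes out: "\<And>k. k \<in> V \<Longrightarrow> s k \<le> t \<Longrightarrow> t < out_end V r par w s k
      \<Longrightarrow> s' k \<le> t' \<and> t' < out_end V r par w s' k"
    and exec: "\<And>k. k \<in> V \<Longrightarrow> s k \<le> t \<Longrightarrow> t < s k + w k \<Longrightarrow> s' k \<le> t' \<and> t' < s' k + w k"
  shows "mem_at V r par w nf f s t \<le> mem_at V r par w nf f s' t'"
  unfolding mem_at_def
proof (rule sum_mono)
  fix k assume k: "k \<in> V"
  have "(if s k \<le> t \<and> t < out_end V r par w s k then f k else 0)
      \<le> (if s' k \<le> t' \<and> t' < out_end V r par w s' k then f k else 0)"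
    using out[OF k] f_nonneg[OF k] by auto
  moreover have "(if s k \<le> t \<and> t < s k + w k then nf k else 0)
      \<le> (if s' k \<le> t' \<and> t' < s' k + w k then nf k else 0)"
    using exec[OF k] nf_nonneg[OF k] by auto
  ultimately show "(if s k \<le> t \<and> t < out_end V r par w s k then f k else 0)
      + (if s k \<le> t \<and> t < s k + w k then nf k else 0)
      \<le> (if s' k \<le> t' \<and> t' < out_end V r par w s' k then f k else 0)
      + (if s' k \<le> t' \<and> t' < s' k + w k then nf k else 0)"
    by (rule add_mono)
qed

lemma no_idle_Cmax_le_work:
  assumes "no_idle V w s" "\<And>i. i \<in> V \<Longrightarrow> 0 \<le> s i"
  shows "Cmax V w s \<le> sum w V"
proof -
  let ?C = "Cmax V w s"
  have cover: "{0..<?C} \<subseteq> (\<Union>i\<in>V. {s i..<s i + w i})"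
    using assms(1) unfolding no_idle_def by auto
  have "?C = measure lborel {0..<?C}" using Cmax_nonneg[OF assms(2)] by simp
  also have "\<dots> \<le> measure lborel (\<Union>i\<in>V. {s i..<s i + w i})"
    by (rule measure_mono_fmeasurable[OF cover])
      (intro fmeasurableD[OF fmeasurable_Ico] fmeasurable.finite_UN fin fmeasurable_Ico)+
  also have "\<dots> \<le> (\<Sum>i\<in>V. measure lborel {s i..<s i + w i})"
    by (rule measure_UNION_le) (auto simp: fin)
  also have "\<dots> = sum w V"
    by (rule sum.cong) (auto simp: w_nonneg)
  finally show ?thesis .
qed

lemma work_le_processors_Cmax:
  assumes v: "valid_sched V r par w p proc s"
  shows "sum w V \<le> real p * Cmax V w s"
proof -
  let ?C = "Cmax V w s" and ?I = "\<lambda>i. {s i..<s i + w i}"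
  have s_nonneg: "\<And>i. i \<in> V \<Longrightarrow> 0 \<le> s i" and proc_lt: "\<And>i. i \<in> V \<Longrightarrow> proc i < p"
    and disj: "\<And>i j. i \<in> V \<Longrightarrow> j \<in> V \<Longrightarrow> i \<noteq> j \<Longrightarrow> proc i = proc j \<Longrightarrow> ?I i \<inter> ?I j = {}"
    using v unfolding valid_sched_def by auto
  have per_processor: "(\<Sum>i\<in>{i\<in>V. proc i = q}. w i) \<le> ?C" for q
  proof -
    let ?Q = "{i\<in>V. proc i = q}"
    have "(\<Sum>i\<in>?Q. w i) = (\<Sum>i\<in>?Q. measure lborel (?I i))"
      by (rule sum.cong) (auto simp: w_nonneg)
    also have "\<dots> = measure lborel (\<Union>i\<in>?Q. ?I i)"
    proof (rule measure_finite_Union[symmetric])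
      show "finite ?Q" using fin by auto
      show "disjoint_family_on ?I ?Q" unfolding disjoint_family_on_def using disj by blast
      show "emeasure lborel (?I i) \<noteq> \<infinity>" for i
        using fmeasurable_Ico[of "s i" "s i + w i"] unfolding fmeasurable_def by auto
    qed auto
    also have "\<dots> \<le> measure lborel {0..<?C}"
    proof (rule measure_mono_fmeasurable)
      show "(\<Union>i\<in>?Q. ?I i) \<subseteq> {0..<?C}" using s_nonneg Cmax_ge[of _ s] by fastforce
      show "(\<Union>i\<in>?Q. ?I i) \<in> sets lborel"
        by (intro fmeasurableD fmeasurable.finite_UN fmeasurable_Ico) (use fin in auto)
    qed (rule fmeasurable_Ico)
    also have "\<dots> = ?C" using Cmax_nonneg[OF s_nonneg] by simp
    finally show ?thesis .
  qed
  have "sum w V = (\<Sum>q\<in>{..<p}. \<Sum>i\<in>{i\<in>V. proc i = q}. w i)"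
    by (rule sum.group[symmetric]) (use fin proc_lt in auto)
  also have "\<dots> \<le> (\<Sum>q\<in>{..<p}. ?C)" by (rule sum_mono) (rule per_processor)
  finally show ?thesis by simp
qed

section \<open>Compaction into a sequential schedule\<close>

text \<open>The depth of a task (distance to the root) ranks children before parents when completion
  and start times tie, which happens for tasks of length 0.\<close>

definition depth :: "nat \<Rightarrow> nat" where
  "depth i = (LEAST n. (par ^^ n) i = r)"

lemma reaches_root: "i \<in> V \<Longrightarrow> \<exists>n. (par ^^ n) i = r"
proof -
  assume "i \<in> V"
  then have "(i, r) \<in> (parent_rel V r par)\<^sup>*" using tree unfolding in_tree_def by auto
  then show ?thesis
  proof (induction rule: converse_rtrancl_induct)
    case base
    show ?case by (rule exI[of _ 0]) simp
  next
    case (step y z)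
    then obtain n where "(par ^^ n) z = r" by blast
    moreover have "z = par y" using step(1) unfolding parent_rel_def by auto
    ultimately show ?case by (intro exI[of _ "Suc n"]) (simp add: funpow_Suc_right del: funpow.simps)
  qed
qed

lemma depth_parent: assumes "j \<in> V" "j \<noteq> r" shows "depth (par j) < depth j"
proof -
  obtain n where "(par ^^ n) j = r" using reaches_root assms(1) by blast
  then have reach: "(par ^^ depth j) j = r" unfolding depth_def by (rule LeastI)
  then obtain m where m: "depth j = Suc m" using assms(2) by (cases "depth j") auto
  then have "(par ^^ m) (par j) = r" using reach by (simp add: funpow_Suc_right del: funpow.simps)
  then have "depth (par j) \<le> m" unfolding depth_def by (rule Least_le)
  then show ?thesis using m by simp
qed


definition rank :: "(nat \<Rightarrow> real) \<Rightarrow> nat \<Rightarrow> real list" where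
  "rank \<sigma> i = [\<sigma> i + w i, \<sigma> i, - real (depth i), real i]"

lemma rank_inj: "inj_on (rank \<sigma>) V"
  by (auto simp: inj_on_def rank_def)

lemma rank_parent:
  assumes v: "valid_sched V r par w p proc \<sigma>" and j: "j \<in> V" "j \<noteq> r"
  shows "rank \<sigma> j < rank \<sigma> (par j)"
proof -
  have "j \<in> children V r par (par j)" using j by (simp add: children_def)
  then have "\<sigma> j + w j \<le> \<sigma> (par j)" using v par_in[OF j] unfolding valid_sched_def by blast
  then show ?thesis
    using w_nonneg[OF j(1)] w_nonneg[OF par_in[OF j]] depth_parent[OF j] by (auto simp: rank_def)
qed

lemma rank_le_completion:
  assumes "rank \<sigma> k \<le> rank \<sigma> i" "0 \<le> w k"
  shows "\<sigma> k + w k \<le> \<sigma> i + w i \<and> (0 < w i \<longrightarrow> \<sigma> k < \<sigma> i + w i)"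
  using assms by (auto simp: rank_def)

definition compaction :: "(nat \<Rightarrow> real) \<Rightarrow> nat \<Rightarrow> real" where
  "compaction \<sigma> = seq_start V w (rank \<sigma>)"

definition sequential_schedules :: "(nat \<Rightarrow> real) set" where
  "sequential_schedules =
     {s \<in> pred_sum_schedules V w. valid_sched V r par w 1 (\<lambda>_. 0) s \<and> no_idle V w s}"

lemma finite_sequential_schedules: "finite sequential_schedules"
  using finite_pred_sum_schedules[OF fin] unfolding sequential_schedules_def by auto

lemma seq_start_sequential:
  assumes "inj_on key V" "\<And>j. j \<in> V \<Longrightarrow> j \<noteq> r \<Longrightarrow> key j < key (par j)"
  shows "seq_start V w key \<in> sequential_schedules"
  using seq_start_in_pred_sum_schedules[where V=V and w=w, OF fin w_nonneg]
    seq_start_valid[where V=V and w=w, OF fin w_nonneg assms]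
    seq_start_no_idle[where V=V and w=w, OF fin w_nonneg assms(1)] root_in
  unfolding sequential_schedules_def by blast

lemma compaction_sequential:
  "valid_sched V r par w p proc \<sigma> \<Longrightarrow> compaction \<sigma> \<in> sequential_schedules"
  unfolding compaction_def by (intro seq_start_sequential rank_inj rank_parent)

lemma compaction_order:
  assumes "k \<in> V" "j \<in> V" "compaction \<sigma> k < compaction \<sigma> j + w j"
  shows "rank \<sigma> k \<le> rank \<sigma> j"
  using seq_start_order[where V=V and w=w, OF fin w_nonneg assms(1,2)] assms(3)
  unfolding compaction_def by blast

text \<open>Key step: every file present at time t of the compaction, while task i runs there, is present
  in the original schedule at the latest start time of a task ranked no later than i.\<close>

lemma compaction_dominates:
  assumes i: "i \<in> V" "compaction \<sigma> i \<le> t" "t < compaction \<sigma> i + w i"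
  shows "mem_at V r par w nf f (compaction \<sigma>) t
       \<le> mem_at V r par w nf f \<sigma> (Max (\<sigma> ` {k\<in>V. rank \<sigma> k \<le> rank \<sigma> i}))"
proof -
  let ?S = "compaction \<sigma>" and ?K = "{k\<in>V. rank \<sigma> k \<le> rank \<sigma> i}"
  define \<tau> where "\<tau> = Max (\<sigma> ` ?K)"
  have finK: "finite ?K" using fin by simp
  have before_tau: "\<sigma> k \<le> \<tau>" if "k \<in> ?K" for k
    using Max_ge[of "\<sigma> ` ?K" "\<sigma> k"] finK that by (simp add: \<tau>_def)
  have started: "k \<in> ?K" if "k \<in> V" "?S k \<le> t" for k
    using compaction_order[of k i] that i by auto
  have tau_lt: "\<tau> < \<sigma> i + w i"
  proof -
    have "\<tau> \<in> \<sigma> ` ?K" unfolding \<tau>_def using finK i(1) by (intro Max_in) auto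
    then obtain k where "k \<in> ?K" "\<tau> = \<sigma> k" by blast
    moreover have "0 < w i" using i(2,3) by linarith
    ultimately show ?thesis using rank_le_completion w_nonneg by auto
  qed
  have tau_ge: "\<sigma> i \<le> \<tau>" using before_tau i(1) by simp
  show ?thesis unfolding \<tau>_def[symmetric]
  proof (rule mem_at_le_if_files_persist)
    fix k assume k: "k \<in> V" "?S k \<le> t" "t < out_end V r par w ?S k"
    have "\<tau> < out_end V r par w \<sigma> k"
    proof (cases "k = r")
      case True
      then show ?thesis using tau_lt Cmax_ge[OF i(1), of \<sigma>] by (simp add: out_end_def)
    next
      case False
      then have "?S i < ?S (par k) + w (par k)" using k i(2) by (simp add: out_end_def)
      then have "rank \<sigma> i \<le> rank \<sigma> (par k)" using compaction_order i(1) par_in[OF k(1) False] by blast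
      then have "\<sigma> i + w i \<le> \<sigma> (par k) + w (par k)" using rank_le_completion w_nonneg i(1) by blast
      then show ?thesis using tau_lt False by (simp add: out_end_def)
    qed
    then show "\<sigma> k \<le> \<tau> \<and> \<tau> < out_end V r par w \<sigma> k" using before_tau started k by blast
  next
    fix k assume k: "k \<in> V" "?S k \<le> t" "t < ?S k + w k"
    have "rank \<sigma> k \<le> rank \<sigma> i" "rank \<sigma> i \<le> rank \<sigma> k"
      using compaction_order[of k i] compaction_order[of i k] i k by auto
    then have "k = i" using rank_inj[of \<sigma>] i(1) k(1) by (auto simp: inj_on_eq_iff)
    then show "\<sigma> k \<le> \<tau> \<and> \<tau> < \<sigma> k + w k" using tau_ge tau_lt by simp
  qed
qed

text \<open>Hence compaction never increases the peak memory.\<close>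

lemma compaction_peak: "peak_mem V r par w nf f (compaction \<sigma>) \<le> peak_mem V r par w nf f \<sigma>"
proof (rule peak_le)
  fix t
  let ?S = "compaction \<sigma>"
  show "mem_at V r par w nf f ?S t \<le> peak_mem V r par w nf f \<sigma>"
  proof (cases "0 \<le> t \<and> t < Cmax V w ?S")
    case True
    then obtain i where "i \<in> V" "?S i \<le> t" "t < ?S i + w i"
      using seq_start_no_idle[where V=V and w=w, OF fin w_nonneg rank_inj] root_in
      unfolding compaction_def no_idle_def by blast
    then show ?thesis using compaction_dominates peak_ge order_trans by blast
  next
    case False
    have "\<And>i. 0 \<le> ?S i" unfolding compaction_def using seq_start_nonneg[where V=V and w=w, OF fin w_nonneg] .
    then show ?thesis using mem_at_outside[OF _ False] peak_nonneg by simp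
  qed
qed


definition depth_key :: "nat \<Rightarrow> real list" where
  "depth_key i = [- real (depth i), real i]"

lemma sequential_schedules_nonempty: "sequential_schedules \<noteq> {}"
proof -
  have "seq_start V w depth_key \<in> sequential_schedules"
    by (rule seq_start_sequential) (auto simp: inj_on_def depth_key_def depth_parent)
  then show ?thesis by blast
qed

lemma sequential_valid:
  assumes "s \<in> sequential_schedules" "1 \<le> p"
  shows "valid_sched V r par w p (\<lambda>_. 0) s"
  using assms unfolding sequential_schedules_def valid_sched_def by auto

text \<open>The minimum peak memory over sequential schedules is attained, and it is the optimal peak
  memory for any number of processors, because compaction maps every schedule into this set.\<close>

definition min_seq_peak :: real where
  "min_seq_peak = Min (peak_mem V r par w nf f ` sequential_schedules)"

lemma min_seq_peak_attained: "\<exists>s\<in>sequential_schedules. peak_mem V r par w nf f s = min_seq_peak"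
proof -
  have "min_seq_peak \<in> peak_mem V r par w nf f ` sequential_schedules"
    unfolding min_seq_peak_def
    using finite_sequential_schedules sequential_schedules_nonempty by (intro Min_in) auto
  then show ?thesis by auto
qed

lemma Mstar_eq_min_seq_peak:
  assumes "1 \<le> p"
  shows "Mstar V r par w nf f p = min_seq_peak"
  unfolding Mstar_def
proof (rule cInf_eq_minimum)
  obtain s where "s \<in> sequential_schedules" "peak_mem V r par w nf f s = min_seq_peak"
    using min_seq_peak_attained by blast
  then show "min_seq_peak \<in> {peak_mem V r par w nf f \<sigma> |\<sigma>. \<exists>proc. valid_sched V r par w p proc \<sigma>}"
    using sequential_valid[OF _ assms] by force
next
  fix x assume "x \<in> {peak_mem V r par w nf f \<sigma> |\<sigma>. \<exists>proc. valid_sched V r par w p proc \<sigma>}"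
  then obtain \<sigma> proc where x: "x = peak_mem V r par w nf f \<sigma>" and v: "valid_sched V r par w p proc \<sigma>"
    by blast
  have "min_seq_peak \<le> peak_mem V r par w nf f (compaction \<sigma>)"
    unfolding min_seq_peak_def using finite_sequential_schedules compaction_sequential[OF v] by simp
  also have "\<dots> \<le> x" using compaction_peak x by simp
  finally show "min_seq_peak \<le> x" .
qed

lemma work_le_processors_Cstar:
  assumes "1 \<le> p"
  shows "sum w V \<le> real p * Cstar V r par w p"
proof -
  have p_pos: "0 < real p" using assms by simp
  obtain s where "s \<in> sequential_schedules" using sequential_schedules_nonempty by blast
  then have nonempty: "{Cmax V w \<sigma> |\<sigma>. \<exists>proc. valid_sched V r par w p proc \<sigma>} \<noteq> {}"
    using sequential_valid[OF _ assms] by blast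
  have "sum w V / real p \<le> Cstar V r par w p"
    unfolding Cstar_def
  proof (rule cInf_greatest[OF nonempty])
    fix x assume "x \<in> {Cmax V w \<sigma> |\<sigma>. \<exists>proc. valid_sched V r par w p proc \<sigma>}"
    then obtain \<sigma> proc where "x = Cmax V w \<sigma>" "valid_sched V r par w p proc \<sigma>" by blast
    then show "sum w V / real p \<le> x"
      using work_le_processors_Cmax p_pos by (simp add: divide_le_eq mult.commute)
  qed
  then show ?thesis using p_pos by (simp add: divide_le_eq mult.commute)
qed

theorem sequential_memory_optimum:
  assumes "1 \<le> p"
  shows "(\<exists>proc \<sigma>. valid_sched V r par w 1 proc \<sigma> \<and> no_idle V w \<sigma> \<and>
            peak_mem V r par w nf f \<sigma> = Mstar V r par w nf f 1)
       \<and> (\<forall>proc \<sigma>. valid_sched V r par w 1 proc \<sigma> \<and> no_idle V w \<sigma> \<and>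
            peak_mem V r par w nf f \<sigma> = Mstar V r par w nf f 1 \<longrightarrow>
            peak_mem V r par w nf f \<sigma> = Mstar V r par w nf f p \<and>
            Cmax V w \<sigma> \<le> real p * Cstar V r par w p)"
proof (intro conjI allI impI)
  obtain s where "s \<in> sequential_schedules" "peak_mem V r par w nf f s = min_seq_peak"
    using min_seq_peak_attained by blast
  then show "\<exists>proc \<sigma>. valid_sched V r par w 1 proc \<sigma> \<and> no_idle V w \<sigma> \<and>
      peak_mem V r par w nf f \<sigma> = Mstar V r par w nf f 1"
    using Mstar_eq_min_seq_peak[of 1] unfolding sequential_schedules_def by auto
next
  fix proc \<sigma>
  assume opt: "valid_sched V r par w 1 proc \<sigma> \<and> no_idle V w \<sigma> \<and>
      peak_mem V r par w nf f \<sigma> = Mstar V r par w nf f 1"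
  then show "peak_mem V r par w nf f \<sigma> = Mstar V r par w nf f p"
    using Mstar_eq_min_seq_peak[of 1] Mstar_eq_min_seq_peak[OF assms] by simp
  have "\<And>i. i \<in> V \<Longrightarrow> 0 \<le> \<sigma> i" using opt unfolding valid_sched_def by auto
  then have "Cmax V w \<sigma> \<le> sum w V" using no_idle_Cmax_le_work opt by blast
  then show "Cmax V w \<sigma> \<le> real p * Cstar V r par w p"
    using work_le_processors_Cstar[OF assms] by linarith
qed

end

section \<open>The star tree\<close>

text \<open>Each interval contains one of the instants C - 1 - q with
  q < floor C.\<close>

lemma unit_intervals_pigeonhole:
  fixes s :: "nat \<Rightarrow> real"
  assumes L: "finite L" and C: "0 \<le> C" and inside: "\<And>i. i \<in> L \<Longrightarrow> 0 \<le> s i \<and> s i + 1 \<le> C"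
    and load: "\<And>t. real (card {i\<in>L. s i \<le> t \<and> t < s i + 1}) \<le> P"
  shows "real (card L) \<le> C * P"
proof -
  define N where "N = nat \<lfloor>C\<rfloor>"
  define slot where "slot i = nat \<lfloor>C - 1 - s i\<rfloor>" for i
  define t where "t q = C - 1 - real q" for q :: nat
  have slot_lt: "slot i < N" if "i \<in> L" for i
    using inside[OF that] unfolding slot_def N_def by linarith
  have slot_covers: "s i \<le> t (slot i) \<and> t (slot i) < s i + 1" if "i \<in> L" for i
    using inside[OF that] unfolding slot_def t_def by linarith
  have slot_load: "real (card {i\<in>L. slot i = q}) \<le> P" for q
  proof -
    have "{i\<in>L. slot i = q} \<subseteq> {i\<in>L. s i \<le> t q \<and> t q < s i + 1}" using slot_covers by auto
    then have "card {i\<in>L. slot i = q} \<le> card {i\<in>L. s i \<le> t q \<and> t q < s i + 1}"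
      using L by (intro card_mono) auto
    then show ?thesis using load[of "t q"] by linarith
  qed
  have "real (card L) = (\<Sum>q<N. \<Sum>i\<in>{i\<in>L. slot i = q}. 1)"
    using sum.group[of L "{..<N}" slot "\<lambda>_. 1::real"] L slot_lt by fastforce
  also have "\<dots> \<le> (\<Sum>q<N. P)" using slot_load by (intro sum_mono) simp
  also have "\<dots> = real N * P" by simp
  also have "\<dots> \<le> C * P"
    using load[of 0] C unfolding N_def by (intro mult_right_mono) linarith+
  finally show ?thesis .
qed

definition leaf_weight :: "nat \<Rightarrow> real" where
  "leaf_weight i = (if i = 0 then 0 else 1)"

lemma star_in_tree: "in_tree {0..p} 0 (\<lambda>_. 0) leaf_weight leaf_weight (\<lambda>_. 0)"
  unfolding in_tree_def
proof (intro conjI ballI)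
  fix i assume i: "i \<in> {0..p}"
  show "(i, 0) \<in> (parent_rel {0..p} 0 (\<lambda>_. 0))\<^sup>*"
  proof (cases "i = 0")
    case False
    then have "(i, 0) \<in> parent_rel {0..p} 0 (\<lambda>_. 0)" using i unfolding parent_rel_def by auto
    then show ?thesis by blast
  qed simp
qed (auto simp: leaf_weight_def)

lemma star_mem_at:
  "mem_at {0..p} 0 (\<lambda>_. 0) leaf_weight leaf_weight (\<lambda>_. 0) \<sigma> t
     = real (card {i\<in>{1..p}. \<sigma> i \<le> t \<and> t < \<sigma> i + 1})"
proof -
  define X where "X = {i\<in>{1..p}. \<sigma> i \<le> t \<and> t < \<sigma> i + 1}"
  have "mem_at {0..p} 0 (\<lambda>_. 0) leaf_weight leaf_weight (\<lambda>_. 0) \<sigma> t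
      = (\<Sum>i\<in>{0..p}. if i \<in> X then 1 else 0)"
    unfolding mem_at_def X_def by (rule sum.cong) (auto simp: leaf_weight_def)
  also have "\<dots> = real (card ({0..p} \<inter> X))" by (simp add: sum.If_cases)
  also have "{0..p} \<inter> X = X" by (auto simp: X_def)
  finally show ?thesis unfolding X_def .
qed


context
  fixes p :: nat
  assumes p_pos: "1 \<le> p"
begin

interpretation star: task_tree "{0..p}" 0 "\<lambda>_. 0" leaf_weight leaf_weight "\<lambda>_. 0"
  by unfold_locales (rule star_in_tree)

lemma star_Cmax_ge:
  assumes "valid_sched {0..p} 0 (\<lambda>_. 0) leaf_weight p proc \<sigma>"
  shows "1 \<le> Cmax {0..p} leaf_weight \<sigma>"
proof -
  have "0 \<le> \<sigma> 1" using assms p_pos unfolding valid_sched_def by simp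
  then show ?thesis using star.Cmax_ge[of 1 \<sigma>] p_pos by (simp add: leaf_weight_def)
qed

lemma star_peak_ge: "1 \<le> peak_mem {0..p} 0 (\<lambda>_. 0) leaf_weight leaf_weight (\<lambda>_. 0) \<sigma>"
proof -
  define X where "X = {i\<in>{1..p}. \<sigma> i \<le> \<sigma> 1 \<and> \<sigma> 1 < \<sigma> i + 1}"
  have "1 \<in> X" using p_pos by (simp add: X_def)
  moreover have "finite X" by (simp add: X_def)
  ultimately have "1 \<le> card X" using card_gt_0_iff[of X] by fastforce
  then show ?thesis using star.peak_ge[of \<sigma> "\<sigma> 1"] star_mem_at[of p \<sigma> "\<sigma> 1"] unfolding X_def by linarith
qed

lemma star_tradeoff:
  assumes v: "valid_sched {0..p} 0 (\<lambda>_. 0) leaf_weight p proc \<sigma>"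
  shows "real p \<le> Cmax {0..p} leaf_weight \<sigma> * peak_mem {0..p} 0 (\<lambda>_. 0) leaf_weight leaf_weight (\<lambda>_. 0) \<sigma>"
proof -
  have start_nonneg: "\<And>i. i \<in> {0..p} \<Longrightarrow> 0 \<le> \<sigma> i" using v unfolding valid_sched_def by auto
  have "real (card {1..p})
      \<le> Cmax {0..p} leaf_weight \<sigma> * peak_mem {0..p} 0 (\<lambda>_. 0) leaf_weight leaf_weight (\<lambda>_. 0) \<sigma>"
  proof (rule unit_intervals_pigeonhole)
    show "0 \<le> Cmax {0..p} leaf_weight \<sigma>" using star.Cmax_nonneg start_nonneg by blast
    show "0 \<le> \<sigma> i \<and> \<sigma> i + 1 \<le> Cmax {0..p} leaf_weight \<sigma>" if "i \<in> {1..p}" for i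
      using start_nonneg star.Cmax_ge[of i \<sigma>] that by (auto simp: leaf_weight_def)
    show "real (card {i\<in>{1..p}. \<sigma> i \<le> t \<and> t < \<sigma> i + 1})
        \<le> peak_mem {0..p} 0 (\<lambda>_. 0) leaf_weight leaf_weight (\<lambda>_. 0) \<sigma>" for t
      using star.peak_ge[of \<sigma> t] by (simp add: star_mem_at)
  qed simp
  then show ?thesis by simp
qed

lemma star_Cstar: "Cstar {0..p} 0 (\<lambda>_. 0) leaf_weight p = 1"
  unfolding Cstar_def
proof (rule cInf_eq_minimum)
  define parallel where "parallel i = (if i = 0 then 1 else 0 :: real)" for i :: nat
  have "valid_sched {0..p} 0 (\<lambda>_. 0) leaf_weight p (\<lambda>i. i - 1) parallel"
    unfolding valid_sched_def parallel_def using p_pos by (auto simp: children_def leaf_weight_def)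
  moreover have "(\<lambda>i. parallel i + leaf_weight i) ` {0..p} = {1}"
    by (auto simp: parallel_def leaf_weight_def)
  then have "Cmax {0..p} leaf_weight parallel = 1" by (simp add: Cmax_def)
  ultimately show "1 \<in> {Cmax {0..p} leaf_weight \<sigma> |\<sigma>. \<exists>proc. valid_sched {0..p} 0 (\<lambda>_. 0) leaf_weight p proc \<sigma>}"
    by force
qed (use star_Cmax_ge in blast)

lemma star_Mstar: "Mstar {0..p} 0 (\<lambda>_. 0) leaf_weight leaf_weight (\<lambda>_. 0) p = 1"
  unfolding Mstar_def
proof (rule cInf_eq_minimum)
  define one_by_one where "one_by_one i = (if i = 0 then real p else real i - 1)" for i :: nat
  have unit_disjoint: "{real i - 1..<real i} \<inter> {real j - 1..<real j} = {}" if "i \<noteq> j" for i j :: nat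
  proof (rule ccontr)
    assume "{real i - 1..<real i} \<inter> {real j - 1..<real j} \<noteq> {}"
    then have "real i < real j + 1" "real j < real i + 1" by auto
    then show False using that by linarith
  qed
  have "valid_sched {0..p} 0 (\<lambda>_. 0) leaf_weight p (\<lambda>_. 0) one_by_one"
    unfolding valid_sched_def
  proof (intro conjI ballI impI)
    fix i j assume "i \<in> {0..p}" "j \<in> {0..p}" "i \<noteq> j \<and> (0::nat) = 0"
    then show "{one_by_one i..<one_by_one i + leaf_weight i} \<inter> {one_by_one j..<one_by_one j + leaf_weight j} = {}"
      using unit_disjoint[of i j] by (auto simp: one_by_one_def leaf_weight_def)
  next
    fix i j assume "i \<in> {0..p}" "j \<in> children {0..p} 0 (\<lambda>_. 0) i"
    then show "one_by_one j + leaf_weight j \<le> one_by_one i"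
      by (auto simp: children_def one_by_one_def leaf_weight_def)
  qed (use p_pos in \<open>auto simp: one_by_one_def\<close>)
  moreover have "peak_mem {0..p} 0 (\<lambda>_. 0) leaf_weight leaf_weight (\<lambda>_. 0) one_by_one \<le> 1"
  proof (rule star.peak_le)
    fix t
    have "{i\<in>{1..p}. one_by_one i \<le> t \<and> t < one_by_one i + 1} \<subseteq> {nat \<lfloor>t\<rfloor> + 1}"
    proof
      fix i assume i: "i \<in> {i\<in>{1..p}. one_by_one i \<le> t \<and> t < one_by_one i + 1}"
      then have "\<lfloor>t\<rfloor> = int i - 1" by (intro floor_unique) (auto simp: one_by_one_def)
      then show "i \<in> {nat \<lfloor>t\<rfloor> + 1}" using i by auto
    qed
    then have "card {i\<in>{1..p}. one_by_one i \<le> t \<and> t < one_by_one i + 1} \<le> 1"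
      using card_mono[of "{nat \<lfloor>t\<rfloor> + 1}"] by fastforce
    then show "mem_at {0..p} 0 (\<lambda>_. 0) leaf_weight leaf_weight (\<lambda>_. 0) one_by_one t \<le> 1"
      by (simp add: star_mem_at)
  qed
  ultimately show "1 \<in> {peak_mem {0..p} 0 (\<lambda>_. 0) leaf_weight leaf_weight (\<lambda>_. 0) \<sigma> |\<sigma>.
      \<exists>proc. valid_sched {0..p} 0 (\<lambda>_. 0) leaf_weight p proc \<sigma>}"
    using star_peak_ge[of one_by_one] by force
qed (use star_peak_ge in blast)

end

lemma star_tree_lower_bound:
  assumes "2 \<le> p"
  shows "\<exists>V r par w nf f. in_tree V r par w nf f \<and>
      (\<forall>proc \<sigma>. valid_sched V r par w p proc \<sigma> \<longrightarrow>
         (Cmax V w \<sigma> / Cstar V r par w p) *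
         (peak_mem V r par w nf f \<sigma> / Mstar V r par w nf f p) \<ge> real p)"
proof -
  have p: "1 \<le> p" using assms by simp
  have "\<forall>proc \<sigma>. valid_sched {0..p} 0 (\<lambda>_. 0) leaf_weight p proc \<sigma> \<longrightarrow>
      (Cmax {0..p} leaf_weight \<sigma> / Cstar {0..p} 0 (\<lambda>_. 0) leaf_weight p) *
      (peak_mem {0..p} 0 (\<lambda>_. 0) leaf_weight leaf_weight (\<lambda>_. 0) \<sigma>
        / Mstar {0..p} 0 (\<lambda>_. 0) leaf_weight leaf_weight (\<lambda>_. 0) p) \<ge> real p"
    using star_tradeoff[OF p] star_Cstar[OF p] star_Mstar[OF p] by simp
  then show ?thesis using star_in_tree by blast
qed

theorem lemma2:
  shows "(\<forall>p::nat. p \<ge> 2 \<longrightarrow>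
           (\<exists>V r par w nf f. in_tree V r par w nf f \<and>
              (\<forall>proc \<sigma>. valid_sched V r par w p proc \<sigma> \<longrightarrow>
                 (Cmax V w \<sigma> / Cstar V r par w p) *
                 (peak_mem V r par w nf f \<sigma> / Mstar V r par w nf f p) \<ge> real p)))
       \<and>
       (\<forall>V r par w nf f (p::nat). in_tree V r par w nf f \<and> p \<ge> 1 \<longrightarrow>
           (\<exists>proc \<sigma>. valid_sched V r par w 1 proc \<sigma> \<and> no_idle V w \<sigma> \<and>
                peak_mem V r par w nf f \<sigma> = Mstar V r par w nf f 1) \<and>
           (\<forall>proc \<sigma>. valid_sched V r par w 1 proc \<sigma> \<and> no_idle V w \<sigma> \<and>
                peak_mem V r par w nf f \<sigma> = Mstar V r par w nf f 1 \<longrightarrow>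
                peak_mem V r par w nf f \<sigma> = Mstar V r par w nf f p \<and>
                Cmax V w \<sigma> \<le> real p * Cstar V r par w p))"
  using star_tree_lower_bound task_tree.sequential_memory_optimum[OF task_tree.intro] by blast

end
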